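(* Let $B_J\in\mathbb R^{n\times n}$ be irreducible with $B_J\ge O$ elementwise, let $\mathcal B=(B_1,\dots,B_d)$ be a splitting of $B_J$, and assume $\lambda:=\rho(T(\mathcal B))>0$. Then $T(\mathcal B)$ has an elementwise positive eigenvector $[\alpha_1^T,\dots,\alpha_d^T]^T$ for the eigenvalue $\lambda$ such that, elementwise, $0<\lambda\alpha_1\le\alpha_d\le\alpha_{d-1}\le\cdots\le\alpha_2\le\alpha_1$ if $\lambda\le1$, and $0<\alpha_1\le\alpha_2\le\cdots\le\alpha_{d-1}\le\alpha_d\le\lambda\alpha_1$ if $\lambda\ge1$.
   Context: For $B\in\mathbb R^{n\times n}$, a splitting of $B$ of order $d\ge1$ is an ordered $d$-tuple $\mathcal B=(B_1,\dots,B_d)$ of real $n\times n$ matrices with $B_p\neq O$ for all $p$, $\sum_{p=1}^d B_p=B$, and $B_p\circ B_q=O$ (Hadamard product) for $p\ne q$. The iteration matrix of $\mathcal B$ is the $dn\times dn$ matrix $T(\mathcal B)=(I_{dn}-\mathcal L)^{-1}\mathcal U$, where $\mathcal L,\mathcal U$ are $d\times d$ block matrices with $n\times n$ blocks, $\mathcal L_{ij}=B_j$ if $i>j$ and $O$ otherwise, $\mathcal U_{ij}=B_j$ if $i\le j$ and $O$ otherwise. $\rho$ denotes spectral radius; inequalities are elementwise. *)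

theory Defs
  imports "Jordan_Normal_Form.Spectral_Radius" "Jordan_Normal_Form.Gauss_Jordan_Elimination"
begin

(* Matrices are Jordan_Normal_Form matrices ('a mat) carrying their dimension.
   Row/column indices are 0-based (0..<n); splitting components are indexed 1..d
   as in the paper (Bs p for p in {1..d}). *)

definition nonneg_mat :: "real mat \<Rightarrow> bool" where
  "nonneg_mat A \<longleftrightarrow> (\<forall>i<dim_row A. \<forall>j<dim_col A. A $$ (i,j) \<ge> 0)"

(* Reducibility (Varga): for n >= 2, A is reducible iff there is a permutation P with
   P A P^T = [[A11, A12], [O, A22]] (square diagonal blocks of positive size);
   equivalently there is a nonempty proper subset S of the indices (the indices of the
   A22 block) with a_ij = 0 for all i in S, j not in S. *)
definition reducible_mat :: "nat \<Rightarrow> real mat \<Rightarrow> bool" where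
  "reducible_mat n A \<longleftrightarrow>
     (n = 1 \<and> A = 0\<^sub>m 1 1) \<or>
     (n \<ge> 2 \<and> (\<exists>S. S \<noteq> {} \<and> S \<subset> {..<n} \<and>
                    (\<forall>i\<in>S. \<forall>j\<in>{..<n} - S. A $$ (i,j) = 0)))"

definition irreducible_mat :: "nat \<Rightarrow> real mat \<Rightarrow> bool" where
  "irreducible_mat n A \<longleftrightarrow> A \<in> carrier_mat n n \<and> \<not> reducible_mat n A"

definition hadamard_mat :: "real mat \<Rightarrow> real mat \<Rightarrow> real mat" where
  "hadamard_mat A B = mat (dim_row A) (dim_col A) (\<lambda>(i,j). A $$ (i,j) * B $$ (i,j))"

definition is_splitting :: "nat \<Rightarrow> nat \<Rightarrow> real mat \<Rightarrow> (nat \<Rightarrow> real mat) \<Rightarrow> bool" where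
  "is_splitting n d B Bs \<longleftrightarrow>
     d \<ge> 1 \<and> B \<in> carrier_mat n n \<and>
     (\<forall>p\<in>{1..d}. Bs p \<in> carrier_mat n n \<and> Bs p \<noteq> 0\<^sub>m n n) \<and>
     B = mat n n (\<lambda>(i,j). \<Sum>p=1..d. Bs p $$ (i,j)) \<and>
     (\<forall>p\<in>{1..d}. \<forall>q\<in>{1..d}. p \<noteq> q \<longrightarrow> hadamard_mat (Bs p) (Bs q) = 0\<^sub>m n n)"

(* Block matrices L and U (d x d blocks of size n x n).  Global index i < d*n lies in
   block row i div n + 1 (1-based) at local row i mod n. *)
definition block_L :: "nat \<Rightarrow> nat \<Rightarrow> (nat \<Rightarrow> real mat) \<Rightarrow> real mat" where
  "block_L n d Bs = mat (d*n) (d*n) (\<lambda>(i,j).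
      if i div n > j div n then Bs (j div n + 1) $$ (i mod n, j mod n) else 0)"

definition block_U :: "nat \<Rightarrow> nat \<Rightarrow> (nat \<Rightarrow> real mat) \<Rightarrow> real mat" where
  "block_U n d Bs = mat (d*n) (d*n) (\<lambda>(i,j).
      if i div n \<le> j div n then Bs (j div n + 1) $$ (i mod n, j mod n) else 0)"

(* iteration matrix T(B) = (I - L)^{-1} U  (I - L is unit lower triangular, hence invertible) *)
definition iter_mat :: "nat \<Rightarrow> nat \<Rightarrow> (nat \<Rightarrow> real mat) \<Rightarrow> real mat" where
  "iter_mat n d Bs = the (mat_inverse (1\<^sub>m (d*n) - block_L n d Bs)) * block_U n d Bs"

definition rho :: "real mat \<Rightarrow> real" where
  "rho A = spectral_radius (map_mat complex_of_real A)"

definition block_vec :: "nat \<Rightarrow> real vec \<Rightarrow> nat \<Rightarrow> real vec" where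
  "block_vec n x p = vec n (\<lambda>i. x $ ((p - 1) * n + i))"

definition vle :: "nat \<Rightarrow> real vec \<Rightarrow> real vec \<Rightarrow> bool" where
  "vle n u v \<longleftrightarrow> (\<forall>i<n. u $ i \<le> v $ i)"

end

theory Submission
  imports Defs
begin

text \<open>
  The iteration matrix \<open>T = (I - L)\<^sup>-\<^sup>1 U\<close> is nonnegative, because \<open>L\<close> is strictly block lower
  triangular and nonnegative. A nonnegative eigenvector \<open>y\<close> for \<open>\<lambda> = \<rho>(T)\<close> comes from the weak
  Perron--Frobenius theorem, which follows from the nonnegativity of the resolvent \<open>(tI - A)\<^sup>-\<^sup>1\<close>
  for \<open>t > \<rho>(A)\<close>: clearing denominators with the adjugate turns \<open>(tI - A)\<^sup>-\<^sup>1 \<one>\<close> into polynomials, and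
  dividing out the common power of \<open>t - \<rho>(A)\<close> and evaluating at \<open>\<rho>(A)\<close> yields \<open>y\<close>.

  Since \<open>(I - L) T = U\<close>, the equation \<open>T y = \<lambda> y\<close> becomes \<open>U y = \<lambda> (I - L) y\<close>, which
  blockwise says \<open>\<lambda> \<alpha>\<^sub>p = \<Sum>\<^sub>q\<^sub>\<ge>\<^sub>p v\<^sub>q + \<lambda> \<Sum>\<^sub>q\<^sub><\<^sub>p v\<^sub>q\<close> with
  \<open>v\<^sub>q = B\<^sub>q \<alpha>\<^sub>q \<ge> 0\<close>. Hence \<open>\<lambda> (\<alpha>\<^sub>p\<^sub>+\<^sub>1 - \<alpha>\<^sub>p) = (\<lambda> - 1) v\<^sub>p\<close> and
  \<open>\<lambda> \<alpha>\<^sub>d = \<lambda>\<^sup>2 \<alpha>\<^sub>1 + (1 - \<lambda>) v\<^sub>d\<close>, which give both chains of inequalities. A coordinate vanishing in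
  one block forces all \<open>v\<^sub>q\<close> and all blocks to vanish in that coordinate, so the zero coordinates of
  \<open>\<alpha>\<^sub>1\<close> form a set \<open>S\<close> with \<open>(B\<^sub>J)\<^sub>k\<^sub>l = 0\<close> for \<open>k \<in> S\<close>, \<open>l \<notin> S\<close>; irreducibility makes \<open>S\<close> empty.
\<close>

section \<open>Nonnegative matrices\<close>

lemma mult_mat_vec_nth_sum:
  assumes "A \<in> carrier_mat N M" "v \<in> carrier_vec M" "i < N"
  shows "(A *\<^sub>v v) $ i = (\<Sum>j<M. A $$ (i,j) * v $ j)"
  using assms by (auto simp: scalar_prod_def atLeast0LessThan intro!: sum.cong)

lemma nonneg_mat_mult_vec_mono:
  assumes A: "A \<in> carrier_mat N N" "nonneg_mat A"
    and uv: "u \<in> carrier_vec N" "v \<in> carrier_vec N" "\<forall>j<N. u $ j \<le> v $ j" and i: "i < N"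
  shows "(A *\<^sub>v u) $ i \<le> (A *\<^sub>v v) $ i"
proof -
  have "(\<Sum>j<N. A $$ (i,j) * u $ j) \<le> (\<Sum>j<N. A $$ (i,j) * v $ j)"
    using A uv i by (intro sum_mono mult_left_mono) (auto simp: nonneg_mat_def)
  then show ?thesis using mult_mat_vec_nth_sum[OF A(1)] uv i by simp
qed

lemma nonneg_mat_mult_vec_nonneg:
  assumes "A \<in> carrier_mat N N" "nonneg_mat A" "u \<in> carrier_vec N" "\<forall>j<N. 0 \<le> u $ j" "i < N"
  shows "0 \<le> (A *\<^sub>v u) $ i"
  using assms by (subst mult_mat_vec_nth_sum[OF assms(1,3,5)]) (auto simp: nonneg_mat_def intro!: sum_nonneg)

lemma nonneg_mat_mult:
  assumes "A \<in> carrier_mat N M" "B \<in> carrier_mat M K" "nonneg_mat A" "nonneg_mat B"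
  shows "nonneg_mat (A * B)"
  using assms unfolding nonneg_mat_def
  by (auto simp: scalar_prod_def intro!: sum_nonneg)

lemma nonneg_mat_pow:
  assumes "A \<in> carrier_mat N N" "nonneg_mat A"
  shows "nonneg_mat (A ^\<^sub>m k)"
proof (induction k)
  case 0
  show ?case by (auto simp: nonneg_mat_def one_mat_def)
next
  case (Suc k)
  then show ?case using assms by (auto intro: nonneg_mat_mult)
qed

lemma smult_mat_mult_vec:
  fixes A :: "'a :: comm_ring mat"
  assumes "A \<in> carrier_mat N M" "v \<in> carrier_vec M"
  shows "(k \<cdot>\<^sub>m A) *\<^sub>v v = k \<cdot>\<^sub>v (A *\<^sub>v v)"
  using assms by (intro eq_vecI) (auto simp: scalar_prod_def sum_distrib_left ac_simps)

lemma shift_mat_mult_vec: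
  fixes A :: "'a :: comm_ring_1 mat"
  assumes "A \<in> carrier_mat N N" "x \<in> carrier_vec N"
  shows "(t \<cdot>\<^sub>m 1\<^sub>m N - A) *\<^sub>v x = t \<cdot>\<^sub>v x - A *\<^sub>v x"
proof -
  have "(t \<cdot>\<^sub>m 1\<^sub>m N) *\<^sub>v x = t \<cdot>\<^sub>v x"
    using smult_mat_mult_vec[OF one_carrier_mat assms(2)] assms(2) by simp
  then show ?thesis using assms by (simp add: minus_mult_distrib_mat_vec[of _ N N])
qed

lemma nonzero_vec_index:
  assumes "v \<in> carrier_vec N" "v \<noteq> 0\<^sub>v N"
  obtains i where "i < N" "v $ i \<noteq> 0"
  using assms by (metis eq_vecI carrier_vecD index_zero_vec)

section \<open>The spectral radius of a nonnegative matrix\<close>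

lemma rho_nonneg:
  assumes "A \<in> carrier_mat N N" "N > 0"
  shows "0 \<le> rho A"
  using spectral_radius_mem_max(1)[of "map_mat complex_of_real A" N] assms
  unfolding rho_def by auto

lemma eigenvalue_abs_le_rho:
  assumes A: "A \<in> carrier_mat N N" and "N > 0" and "eigenvalue (map_mat complex_of_real A) \<mu>"
  shows "cmod \<mu> \<le> rho A"
  using spectral_radius_mem_max(2)[of "map_mat complex_of_real A" N] assms
  unfolding rho_def spectrum_def by auto

lemma real_eigenvalue_abs_le_rho:
  assumes A: "A \<in> carrier_mat N N" and N: "N > 0" and "eigenvector A v t"
  shows "\<bar>t\<bar> \<le> rho A"
  using eigenvalue_abs_le_rho[OF A N, of "complex_of_real t"]
    of_real_hom.eigenvector_hom[OF A assms(3)]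
  unfolding eigenvalue_def by auto

lemma rho_smult_le:
  assumes A: "A \<in> carrier_mat N N" and N: "N > 0" and t: "t > 0"
  shows "rho (t \<cdot>\<^sub>m A) \<le> t * rho A"
proof -
  let ?C = "map_mat complex_of_real (t \<cdot>\<^sub>m A)"
  have C: "?C \<in> carrier_mat N N" using A by auto
  obtain \<mu> where \<mu>: "\<mu> \<in> spectrum ?C" "rho (t \<cdot>\<^sub>m A) = cmod \<mu>"
    using spectral_radius_mem_max(1)[OF C N] unfolding rho_def by auto
  then obtain v where v: "v \<in> carrier_vec N" "v \<noteq> 0\<^sub>v N" "?C *\<^sub>v v = \<mu> \<cdot>\<^sub>v v"
    using C unfolding spectrum_def eigenvalue_def eigenvector_def by auto
  have "(?C *\<^sub>v v) $ i = complex_of_real t * (map_mat complex_of_real A *\<^sub>v v) $ i" if "i < N" for i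
    using A v(1) that by (simp add: scalar_prod_def sum_distrib_left ac_simps)
  then have "map_mat complex_of_real A *\<^sub>v v = (\<mu> / complex_of_real t) \<cdot>\<^sub>v v"
    using v A t by (intro eq_vecI) (auto simp: field_simps)
  then have "cmod (\<mu> / complex_of_real t) \<le> rho A"
    using v A by (intro eigenvalue_abs_le_rho[OF A N]) (auto simp: eigenvalue_def eigenvector_def)
  then show ?thesis using \<mu> t by (simp add: norm_divide divide_le_eq mult.commute)
qed

lemma pow_mat_entries_bounded:
  assumes A: "A \<in> carrier_mat N N" and "rho A < 1"
  shows "\<exists>c. \<forall>k i j. i < N \<longrightarrow> j < N \<longrightarrow> \<bar>(A ^\<^sub>m k) $$ (i,j)\<bar> \<le> c"
proof -
  obtain c where c: "\<And>k. norm_bound (map_mat complex_of_real A ^\<^sub>m k) c"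
    using spectral_radius_jnf_norm_bound_less_1_upper_triangular[of "map_mat complex_of_real A" N]
      A assms(2) unfolding rho_def by auto
  have "\<bar>(A ^\<^sub>m k) $$ (i,j)\<bar> \<le> c" if "i < N" "j < N" for k i j
    using c[of k] that A unfolding of_real_hom.mat_hom_pow[OF A, symmetric] norm_bound_def
    by auto
  then show ?thesis by blast
qed

lemma nonneg_mat_pow_subinvariant:
  assumes A: "A \<in> carrier_mat N N" "nonneg_mat A" and w: "w \<in> carrier_vec N"
    and r: "0 \<le> r" and sub: "\<forall>i<N. r * w $ i \<le> (A *\<^sub>v w) $ i"
  shows "\<forall>i<N. r ^ k * w $ i \<le> (A ^\<^sub>m k *\<^sub>v w) $ i"
proof (induction k)
  case 0
  then show ?case using w A(1) by simp
next
  case (Suc k)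
  have Ak: "A ^\<^sub>m k \<in> carrier_mat N N" "nonneg_mat (A ^\<^sub>m k)"
    using A nonneg_mat_pow by auto
  show ?case
  proof (intro allI impI)
    fix i assume i: "i < N"
    have "r ^ Suc k * w $ i = r * (r ^ k * w $ i)" by simp
    also have "\<dots> \<le> r * (A ^\<^sub>m k *\<^sub>v w) $ i" using Suc i r by (simp add: mult_left_mono)
    also have "\<dots> = (A ^\<^sub>m k *\<^sub>v (r \<cdot>\<^sub>v w)) $ i" using A(1) w i by (simp add: mult_mat_vec[OF Ak(1) w])
    also have "\<dots> \<le> (A ^\<^sub>m k *\<^sub>v (A *\<^sub>v w)) $ i"
      using Ak A w sub i by (intro nonneg_mat_mult_vec_mono) auto
    also have "\<dots> = (A ^\<^sub>m Suc k *\<^sub>v w) $ i"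
      using assoc_mult_mat_vec[OF Ak(1) A(1) w] by simp
    finally show "r ^ Suc k * w $ i \<le> (A ^\<^sub>m Suc k *\<^sub>v w) $ i" .
  qed
qed

text \<open>If \<open>\<rho>(A) < s\<close>, the powers of \<open>A/s'\<close> for some \<open>\<rho>(A) < s' < s\<close> stay bounded, whereas they
  stretch \<open>w\<close> by \<open>(s/s')\<^sup>k\<close>.\<close>
lemma collatz_wielandt_le_rho:
  assumes A: "A \<in> carrier_mat N N" "nonneg_mat A"
    and w: "w \<in> carrier_vec N" "\<forall>i<N. 0 \<le> w $ i" "w \<noteq> 0\<^sub>v N"
    and sub: "\<forall>i<N. s * w $ i \<le> (A *\<^sub>v w) $ i"
  shows "s \<le> rho A"
proof (rule ccontr)
  assume "\<not> s \<le> rho A"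
  obtain i0 where i0: "i0 < N" "w $ i0 \<noteq> 0" using nonzero_vec_index[OF w(1,3)] .
  then have wi0: "0 < w $ i0" and N: "N > 0" using w(2) by (auto simp: order_less_le)
  define s' where "s' = (rho A + s) / 2"
  have s': "0 < s'" "rho A < s'" "s' < s"
    using rho_nonneg[OF A(1) N] \<open>\<not> s \<le> rho A\<close> unfolding s'_def by auto
  define A' where "A' = (1 / s') \<cdot>\<^sub>m A"
  have A': "A' \<in> carrier_mat N N" "nonneg_mat A'"
    using A s' unfolding A'_def nonneg_mat_def by auto
  have "rho A' \<le> rho A / s'" using rho_smult_le[OF A(1) N, of "1 / s'"] s' unfolding A'_def by simp
  then have "rho A' < 1" using s' divide_less_eq_1_pos[of s' "rho A"] by linarith
  then obtain c where c: "\<And>k j. j < N \<Longrightarrow> \<bar>(A' ^\<^sub>m k) $$ (i0,j)\<bar> \<le> c"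
    using pow_mat_entries_bounded[OF A'(1)] i0 by blast
  define r where "r = s / s'"
  have r: "1 < r" using s' unfolding r_def by simp
  have "\<forall>i<N. r * w $ i \<le> (A' *\<^sub>v w) $ i"
  proof (intro allI impI)
    fix i assume i: "i < N"
    have "(A' *\<^sub>v w) $ i = (A *\<^sub>v w) $ i / s'"
      using A w i by (simp add: A'_def mult_mat_vec_nth_sum sum_divide_distrib)
    then show "r * w $ i \<le> (A' *\<^sub>v w) $ i" using sub i s' by (simp add: r_def divide_right_mono)
  qed
  then have pow: "r ^ k * w $ i0 \<le> (A' ^\<^sub>m k *\<^sub>v w) $ i0" for k
    using nonneg_mat_pow_subinvariant[OF A' w(1)] r i0 by auto
  have bound: "(A' ^\<^sub>m k *\<^sub>v w) $ i0 \<le> c * (\<Sum>j<N. w $ j)" for k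
  proof -
    have "(A' ^\<^sub>m k *\<^sub>v w) $ i0 = (\<Sum>j<N. (A' ^\<^sub>m k) $$ (i0,j) * w $ j)"
      by (rule mult_mat_vec_nth_sum) (use A'(1) w(1) i0 in auto)
    also have "\<dots> \<le> (\<Sum>j<N. c * w $ j)"
      using w(2) by (intro sum_mono mult_right_mono) (auto intro: order_trans[OF abs_ge_self c])
    finally show ?thesis by (simp add: sum_distrib_left)
  qed
  obtain k where "c * (\<Sum>j<N. w $ j) / w $ i0 < r ^ k" using real_arch_pow[OF r] by blast
  then show False using pow[of k] bound[of k] wi0 by (simp add: divide_less_eq)
qed

text \<open>The moduli of an eigenvector for an eigenvalue of maximal modulus.\<close>
lemma exists_nonneg_subinvariant_rho:
  assumes A: "A \<in> carrier_mat N N" "nonneg_mat A" and N: "N > 0"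
  obtains w where "w \<in> carrier_vec N" "\<forall>i<N. 0 \<le> w $ i" "w \<noteq> 0\<^sub>v N"
    "\<forall>i<N. rho A * w $ i \<le> (A *\<^sub>v w) $ i"
proof -
  let ?C = "map_mat complex_of_real A"
  have C: "?C \<in> carrier_mat N N" using A by auto
  obtain \<mu> where \<mu>: "\<mu> \<in> spectrum ?C" "rho A = cmod \<mu>"
    using spectral_radius_mem_max(1)[OF C N] unfolding rho_def by auto
  then obtain z where z: "z \<in> carrier_vec N" "z \<noteq> 0\<^sub>v N" "?C *\<^sub>v z = \<mu> \<cdot>\<^sub>v z"
    using C unfolding spectrum_def eigenvalue_def eigenvector_def by auto
  define w where "w = vec N (\<lambda>i. cmod (z $ i))"
  obtain i0 where "i0 < N" "z $ i0 \<noteq> 0" using nonzero_vec_index[OF z(1,2)] .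
  then have "w \<noteq> 0\<^sub>v N" unfolding w_def by (metis index_vec index_zero_vec(1) norm_eq_zero)
  moreover have "rho A * w $ i \<le> (A *\<^sub>v w) $ i" if i: "i < N" for i
  proof -
    have "rho A * w $ i = cmod ((?C *\<^sub>v z) $ i)"
      using z(1,3) i \<mu>(2) unfolding w_def by (simp add: norm_mult)
    also have "(?C *\<^sub>v z) $ i = (\<Sum>j<N. ?C $$ (i,j) * z $ j)"
      by (rule mult_mat_vec_nth_sum[OF C z(1) i])
    also have "cmod \<dots> \<le> (\<Sum>j<N. cmod (?C $$ (i,j) * z $ j))" by (rule norm_sum)
    also have "\<dots> = (\<Sum>j<N. A $$ (i,j) * w $ j)"
      using A i unfolding w_def nonneg_mat_def by (intro sum.cong) (auto simp: norm_mult)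
    also have "\<dots> = (A *\<^sub>v w) $ i" using mult_mat_vec_nth_sum[OF A(1) _ i, of w] by (simp add: w_def)
    finally show ?thesis .
  qed
  ultimately show ?thesis using that[of w] by (auto simp: w_def)
qed

lemma resolvent_nonneg:
  assumes A: "A \<in> carrier_mat N N" "nonneg_mat A" and t: "rho A < t"
    and x: "x \<in> carrier_vec N" and ge: "\<forall>i<N. (A *\<^sub>v x) $ i \<le> t * x $ i"
  shows "\<forall>i<N. 0 \<le> x $ i"
proof (rule ccontr)
  assume "\<not> ?thesis"
  then obtain i0 where i0: "i0 < N" "x $ i0 < 0" by force
  define w where "w = vec N (\<lambda>i. max (- x $ i) 0)"
  have w: "w \<in> carrier_vec N" "\<forall>i<N. 0 \<le> w $ i" unfolding w_def by auto
  have "w $ i0 \<noteq> 0" using i0 unfolding w_def by simp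
  then have "w \<noteq> 0\<^sub>v N" using i0 by auto
  moreover have "t * w $ i \<le> (A *\<^sub>v w) $ i" if i: "i < N" for i
  proof (cases "x $ i < 0")
    case True
    have "t * w $ i \<le> - (A *\<^sub>v x) $ i" using True ge i unfolding w_def by auto
    also have "\<dots> = (A *\<^sub>v (- x)) $ i"
      using A(1) x i by (simp add: mult_mat_vec_nth_sum sum_negf)
    also have "\<dots> \<le> (A *\<^sub>v w) $ i"
      using A x w i by (intro nonneg_mat_mult_vec_mono) (auto simp: w_def)
    finally show ?thesis .
  next
    case False
    then show ?thesis using nonneg_mat_mult_vec_nonneg[OF A w i] i by (simp add: w_def)
  qed
  ultimately have "t \<le> rho A" using collatz_wielandt_le_rho[OF A w] by blast
  then show False using t by simp
qed

lemma rho_defect_const_nonneg: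
  assumes A: "A \<in> carrier_mat N N" "nonneg_mat A"
    and y: "y \<in> carrier_vec N" "\<forall>i<N. 0 \<le> y $ i" "y \<noteq> 0\<^sub>v N"
    and defect: "\<forall>i<N. rho A * y $ i - (A *\<^sub>v y) $ i = \<sigma>"
  shows "0 \<le> \<sigma>"
proof (rule ccontr)
  assume "\<not> 0 \<le> \<sigma>"
  obtain i0 where i0: "i0 < N" "y $ i0 \<noteq> 0" using nonzero_vec_index[OF y(1,3)] .
  define m where "m = Max ((\<lambda>i. y $ i) ` {..<N})"
  have ym: "y $ i \<le> m" if "i < N" for i unfolding m_def using that by (intro Max_ge) auto
  have "0 < y $ i0" using y(2) i0 by (simp add: order_less_le)
  then have "0 < m" using ym[OF i0(1)] by linarith
  define e where "e = - \<sigma> / m"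
  have e: "0 < e" using \<open>0 < m\<close> \<open>\<not> 0 \<le> \<sigma>\<close> by (simp add: e_def divide_neg_pos)
  have "(rho A + e) * y $ i \<le> (A *\<^sub>v y) $ i" if i: "i < N" for i
  proof -
    have "e * y $ i \<le> e * m" using ym[OF i] e by (simp add: mult_left_mono)
    also have "\<dots> = - \<sigma>" using \<open>0 < m\<close> by (simp add: e_def)
    finally show ?thesis using defect i by (simp add: algebra_simps)
  qed
  then have "rho A + e \<le> rho A" using collatz_wielandt_le_rho[OF A y] by blast
  then show False using e by simp
qed

text \<open>If \<open>\<sigma> > 0\<close> then \<open>y\<close> is positive; scale it to \<open>c y\<close> touching a subinvariant vector \<open>w\<close> from above.\<close>
lemma rho_defect_const_nonpos:
  assumes A: "A \<in> carrier_mat N N" "nonneg_mat A"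
    and y: "y \<in> carrier_vec N" "\<forall>i<N. 0 \<le> y $ i" "y \<noteq> 0\<^sub>v N"
    and defect: "\<forall>i<N. rho A * y $ i - (A *\<^sub>v y) $ i = \<sigma>"
  shows "\<sigma> \<le> 0"
proof (rule ccontr)
  assume "\<not> \<sigma> \<le> 0"
  obtain i0 where "i0 < N" "y $ i0 \<noteq> 0" using nonzero_vec_index[OF y(1,3)] .
  then have N: "N > 0" by auto
  have ypos: "0 < y $ i" if i: "i < N" for i
  proof -
    have "0 < rho A * y $ i"
      using defect nonneg_mat_mult_vec_nonneg[OF A y(1,2) i] i \<open>\<not> \<sigma> \<le> 0\<close> by force
    then show ?thesis using y(2) i rho_nonneg[OF A(1) N] by (simp add: zero_less_mult_iff)
  qed
  obtain w where w: "w \<in> carrier_vec N" "\<forall>i<N. 0 \<le> w $ i" "w \<noteq> 0\<^sub>v N"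
    "\<forall>i<N. rho A * w $ i \<le> (A *\<^sub>v w) $ i"
    using exists_nonneg_subinvariant_rho[OF A N] .
  define c where "c = Max ((\<lambda>i. w $ i / y $ i) ` {..<N})"
  have "c \<in> (\<lambda>i. w $ i / y $ i) ` {..<N}" unfolding c_def using N by (intro Max_in) auto
  then obtain i1 where i1: "i1 < N" "c = w $ i1 / y $ i1" by blast
  have wc: "w $ i \<le> c * y $ i" if i: "i < N" for i
  proof -
    have "w $ i / y $ i \<le> c" unfolding c_def using i by (intro Max_ge) auto
    then show ?thesis using ypos[OF i] by (simp add: divide_le_eq)
  qed
  obtain i2 where i2: "i2 < N" "w $ i2 \<noteq> 0" using nonzero_vec_index[OF w(1,3)] .
  have "0 < w $ i2" using w(2) i2 by (simp add: order_less_le)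
  then have "0 < c * y $ i2" using wc[OF i2(1)] by linarith
  then have "0 < c" using ypos[OF i2(1)] by (simp add: zero_less_mult_iff)
  have "rho A * w $ i1 \<le> (A *\<^sub>v w) $ i1" using w(4) i1 by simp
  also have "\<dots> \<le> (A *\<^sub>v (c \<cdot>\<^sub>v y)) $ i1"
    using A w y wc i1 by (intro nonneg_mat_mult_vec_mono) auto
  also have "\<dots> = c * (rho A * y $ i1 - \<sigma>)"
    using A(1) y(1) i1(1) defect[rule_format, OF i1(1)] by (simp add: mult_mat_vec[OF A(1) y(1)])
  also have "\<dots> = rho A * w $ i1 - c * \<sigma>"
    using i1 ypos[OF i1(1)] by (simp add: algebra_simps)
  finally show False using \<open>0 < c\<close> \<open>\<not> \<sigma> \<le> 0\<close> by (simp add: mult_le_0_iff)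
qed

section \<open>A nonnegative eigenvector for the spectral radius\<close>

lemma poly_nonneg_right_limit:
  fixes p :: "real poly"
  assumes "\<And>t. r < t \<Longrightarrow> 0 \<le> poly p t"
  shows "0 \<le> poly p r"
proof -
  have "(\<lambda>k. r + inverse (real (Suc k))) \<longlonglongrightarrow> r + 0"
    by (intro tendsto_add tendsto_const LIMSEQ_inverse_real_of_nat)
  then have "(\<lambda>k. poly p (r + inverse (real (Suc k)))) \<longlonglongrightarrow> poly p r"
    using isCont_tendsto_compose[OF poly_isCont] by auto
  then show ?thesis using assms by (intro LIMSEQ_le_const) auto
qed

lemma poly_family_divide_common_root_power:
  fixes q :: "nat \<Rightarrow> real poly"
  assumes nz: "\<exists>j<N. q j \<noteq> 0" and nonneg: "\<And>j t. j < N \<Longrightarrow> r < t \<Longrightarrow> 0 \<le> poly (q j) t"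
  obtains k Q where "\<And>j. j < N \<Longrightarrow> q j = [:-r,1:] ^ k * Q j"
    "\<And>j. j < N \<Longrightarrow> 0 \<le> poly (Q j) r" "\<exists>j<N. poly (Q j) r \<noteq> 0"
proof -
  define K where "K = (\<lambda>j. order r (q j)) ` {j. j < N \<and> q j \<noteq> 0}"
  have K: "finite K" "K \<noteq> {}" unfolding K_def using nz by auto
  define k where "k = Min K"
  obtain j0 where j0: "j0 < N" "q j0 \<noteq> 0" "order r (q j0) = k"
    using Min_in[OF K] unfolding k_def K_def by auto
  define Q where "Q j = q j div [:-r,1:] ^ k" for j
  have qQ: "q j = [:-r,1:] ^ k * Q j" if j: "j < N" for j
  proof (cases "q j = 0")
    case False
    then have "k \<le> order r (q j)" using Min_le[OF K(1)] j unfolding k_def K_def by auto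
    then have "[:-r,1:] ^ k dvd q j" by (meson le_imp_power_dvd order_1 dvd_trans)
    then show ?thesis unfolding Q_def by simp
  qed (simp add: Q_def)
  have "poly (Q j0) r \<noteq> 0"
  proof
    assume "poly (Q j0) r = 0"
    then obtain R where "Q j0 = [:-r,1:] * R" by (auto simp: poly_eq_0_iff_dvd elim: dvdE)
    then have "q j0 = [:-r,1:] ^ Suc (order r (q j0)) * R"
      using qQ[OF j0(1)] j0(3) by (metis power_Suc2 mult.assoc)
    then have "[:-r,1:] ^ Suc (order r (q j0)) dvd q j0" by (rule dvdI)
    then show False using order_2[OF j0(2)] by simp
  qed
  moreover have "0 \<le> poly (Q j) r" if j: "j < N" for j
  proof (rule poly_nonneg_right_limit)
    fix t assume t: "r < t"
    have "0 \<le> (t - r) ^ k * poly (Q j) t"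
      using nonneg[OF j t] qQ[OF j] by simp
    moreover have "0 < (t - r) ^ k" using t by simp
    ultimately show "0 \<le> poly (Q j) t" by (simp add: zero_le_mult_iff)
  qed
  ultimately show ?thesis using that qQ j0(1) by blast
qed

lemma poly_adj_mat_cong:
  assumes A: "A \<in> carrier_mat n n" and B: "B \<in> carrier_mat n n"
    and ev: "\<And>i j. i < n \<Longrightarrow> j < n \<Longrightarrow> poly (B $$ (i,j)) t = A $$ (i,j)"
    and ij: "i < n" "j < n"
  shows "poly (adj_mat B $$ (i,j)) t = adj_mat A $$ (i,j)"
proof -
  have "poly (det (mat_delete B j i)) t = det (mat_delete A j i)"
    by (rule poly_det_cong[of _ "n - 1"]) (use A B ev in \<open>auto simp: mat_delete_def\<close>)
  then show ?thesis using A B ij by (simp add: adj_mat_def cofactor_def)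
qed

lemma poly_char_poly_matrix:
  fixes A :: "'a :: comm_ring_1 mat"
  assumes "A \<in> carrier_mat n n" "i < n" "j < n"
  shows "poly (char_poly_matrix A $$ (i,j)) t = (t \<cdot>\<^sub>m 1\<^sub>m n - A) $$ (i,j)"
  using assms by (simp add: char_poly_matrix_def)

lemma poly_char_poly_shift:
  fixes A :: "'a :: comm_ring_1 mat"
  assumes "A \<in> carrier_mat n n"
  shows "poly (char_poly A) t = det (t \<cdot>\<^sub>m 1\<^sub>m n - A)"
  unfolding char_poly_def
proof (rule poly_det_cong)
  show "t \<cdot>\<^sub>m 1\<^sub>m n - A \<in> carrier_mat n n" "char_poly_matrix A \<in> carrier_mat n n"
    using assms by auto
qed (rule poly_char_poly_matrix[OF assms])

lemma det_shift_neq_0: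
  assumes A: "A \<in> carrier_mat N N" and N: "N > 0" and t: "rho A < t"
  shows "det (t \<cdot>\<^sub>m 1\<^sub>m N - A) \<noteq> 0"
proof
  assume "det (t \<cdot>\<^sub>m 1\<^sub>m N - A) = 0"
  then have "eigenvalue A t" using eigenvalue_root_char_poly[OF A] poly_char_poly_shift[OF A] by simp
  then obtain v where "eigenvector A v t" unfolding eigenvalue_def by blast
  then show False using real_eigenvalue_abs_le_rho[OF A N] t by fastforce
qed

lemma det_mult_adj_row_sum_nonneg:
  assumes A: "A \<in> carrier_mat N N" "nonneg_mat A" and t: "rho A < t" and j: "j < N"
  defines "S \<equiv> t \<cdot>\<^sub>m 1\<^sub>m N - A"
  shows "0 \<le> det S * (\<Sum>l<N. adj_mat S $$ (j,l))"
proof -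
  have S: "S \<in> carrier_mat N N" using A unfolding S_def by auto
  have D: "det S \<noteq> 0" using det_shift_neq_0[OF A(1) _ t] j unfolding S_def by auto
  define x where "x = (1 / det S) \<cdot>\<^sub>v (adj_mat S *\<^sub>v vec N (\<lambda>_. 1))"
  have x: "x \<in> carrier_vec N" using adj_mat(1)[OF S] unfolding x_def by auto
  have ones: "vec N (\<lambda>_. 1) \<in> carrier_vec N" by simp
  have "S *\<^sub>v x = (1 / det S) \<cdot>\<^sub>v ((S * adj_mat S) *\<^sub>v vec N (\<lambda>_. 1))"
    unfolding x_def using S adj_mat(1)[OF S]
    by (simp add: mult_mat_vec[of _ N N] assoc_mult_mat_vec[of _ N N _ N])
  also have "\<dots> = vec N (\<lambda>_. 1)"
    using D unfolding adj_mat(2)[OF S] smult_mat_mult_vec[OF one_carrier_mat ones] by auto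
  finally have "S *\<^sub>v x = vec N (\<lambda>_. 1)" .
  then have "t \<cdot>\<^sub>v x - A *\<^sub>v x = vec N (\<lambda>_. 1)"
    using shift_mat_mult_vec[OF A(1) x] unfolding S_def by simp
  then have "(t \<cdot>\<^sub>v x - A *\<^sub>v x) $ i = 1" if "i < N" for i using that by simp
  then have "(A *\<^sub>v x) $ i \<le> t * x $ i" if "i < N" for i using that A(1) x by fastforce
  then have "0 \<le> x $ j" using resolvent_nonneg[OF A t x] j by blast
  moreover have "x $ j = (\<Sum>l<N. adj_mat S $$ (j,l)) / det S"
    using mult_mat_vec_nth_sum[OF adj_mat(1)[OF S] ones j] adj_mat(1)[OF S] j unfolding x_def by simp
  then have "det S * (\<Sum>l<N. adj_mat S $$ (j,l)) = (det S)\<^sup>2 * x $ j"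
    using D by (simp add: power2_eq_square)
  ultimately show ?thesis by simp
qed

text \<open>\<open>q\<^sub>j(t) = det(tI - A)\<^sup>2 ((tI - A)\<^sup>-\<^sup>1 \<one>)\<^sub>j\<close>: the resolvent applied to the all-ones vector, with
  its denominator cleared so that it becomes polynomial in \<open>t\<close>.\<close>
lemma resolvent_polynomials:
  fixes A :: "real mat"
  assumes A: "A \<in> carrier_mat N N" "nonneg_mat A" and N: "N > 0"
  obtains q where "\<exists>j<N. q j \<noteq> 0" "\<And>j t. j < N \<Longrightarrow> rho A < t \<Longrightarrow> 0 \<le> poly (q j) t"
    "\<And>i. i < N \<Longrightarrow> (\<Sum>j<N. char_poly_matrix A $$ (i,j) * q j) = (char_poly A)\<^sup>2"
proof -
  let ?M = "char_poly_matrix A" and ?p = "char_poly A"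
  define q where "q j = ?p * (\<Sum>l<N. adj_mat ?M $$ (j,l))" for j
  have M: "?M \<in> carrier_mat N N" using A by simp
  have adj: "adj_mat ?M \<in> carrier_mat N N" "?M * adj_mat ?M = ?p \<cdot>\<^sub>m 1\<^sub>m N"
    using adj_mat[OF M] unfolding char_poly_def by auto
  have rows: "(\<Sum>j<N. ?M $$ (i,j) * q j) = ?p\<^sup>2" if i: "i < N" for i
  proof -
    have "(\<Sum>j<N. ?M $$ (i,j) * q j) = ?p * (\<Sum>j<N. \<Sum>l<N. ?M $$ (i,j) * adj_mat ?M $$ (j,l))"
      by (simp add: q_def sum_distrib_left ac_simps)
    also have "\<dots> = ?p * (\<Sum>l<N. \<Sum>j<N. ?M $$ (i,j) * adj_mat ?M $$ (j,l))"
      by (subst sum.swap) simp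
    also have "\<dots> = ?p * (\<Sum>l<N. (?M * adj_mat ?M) $$ (i,l))"
      using M adj(1) i by (simp add: scalar_prod_def atLeast0LessThan)
    also have "\<dots> = ?p * (\<Sum>l<N. if i = l then ?p else 0)"
      unfolding adj(2) using i by (intro arg_cong[where f = "\<lambda>s. ?p * s"] sum.cong) auto
    finally show ?thesis using i by (simp add: power2_eq_square)
  qed
  moreover have "0 \<le> poly (q j) t" if j: "j < N" and t: "rho A < t" for j t
  proof -
    have S: "t \<cdot>\<^sub>m 1\<^sub>m N - A \<in> carrier_mat N N" using A by auto
    have "poly (q j) t = det (t \<cdot>\<^sub>m 1\<^sub>m N - A) * (\<Sum>l<N. adj_mat (t \<cdot>\<^sub>m 1\<^sub>m N - A) $$ (j,l))"
      using j poly_adj_mat_cong[OF S M poly_char_poly_matrix[OF A(1)]]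
      by (simp add: q_def poly_sum poly_char_poly_shift[OF A(1)])
    then show ?thesis using det_mult_adj_row_sum_nonneg[OF A t j] by simp
  qed
  moreover have "\<exists>j<N. q j \<noteq> 0"
  proof (rule ccontr)
    assume "\<not> ?thesis"
    then have "?p\<^sup>2 = 0" using rows[OF N] by simp
    then show False using degree_monic_char_poly[OF A(1)] by auto
  qed
  ultimately show ?thesis using that by blast
qed

text \<open>Writing \<open>q = (X - \<rho>)\<^sup>k Q\<close>, each row of \<open>(XI - A) Q\<close> is \<open>p\<^sup>2 / (X - \<rho>)\<^sup>k\<close> for the
  characteristic polynomial \<open>p\<close>, so \<open>(\<rho>I - A) Q(\<rho>)\<close> is a constant vector, which must vanish.\<close>
theorem nonneg_eigenvector_rho:
  fixes A :: "real mat"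
  assumes A: "A \<in> carrier_mat N N" "nonneg_mat A" and N: "N > 0"
  obtains y where "y \<in> carrier_vec N" "y \<noteq> 0\<^sub>v N" "\<forall>i<N. 0 \<le> y $ i" "A *\<^sub>v y = rho A \<cdot>\<^sub>v y"
proof -
  let ?M = "char_poly_matrix A" and ?r = "rho A"
  obtain q where q: "\<exists>j<N. q j \<noteq> 0" "\<And>j t. j < N \<Longrightarrow> ?r < t \<Longrightarrow> 0 \<le> poly (q j) t"
    "\<And>i. i < N \<Longrightarrow> (\<Sum>j<N. ?M $$ (i,j) * q j) = (char_poly A)\<^sup>2"
    using resolvent_polynomials[OF A N] by blast
  obtain k Q where Q: "\<And>j. j < N \<Longrightarrow> q j = [:-?r,1:] ^ k * Q j"
    "\<And>j. j < N \<Longrightarrow> 0 \<le> poly (Q j) ?r" "\<exists>j<N. poly (Q j) ?r \<noteq> 0"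
    using poly_family_divide_common_root_power[OF q(1,2)] by blast
  define V where "V i = (\<Sum>j<N. ?M $$ (i,j) * Q j)" for i
  have XV: "[:-?r,1:] ^ k * V i = (char_poly A)\<^sup>2" if "i < N" for i
    using q(3)[OF that] Q(1) by (simp add: V_def sum_distrib_left ac_simps)
  have V: "V i = V 0" if "i < N" for i
  proof -
    have "[:-?r,1:] ^ k * V i = [:-?r,1:] ^ k * V 0" using XV[OF that] XV[OF N] by simp
    then show ?thesis by simp
  qed
  define y where "y = vec N (\<lambda>j. poly (Q j) ?r)"
  have y: "y \<in> carrier_vec N" "\<forall>i<N. 0 \<le> y $ i" "y \<noteq> 0\<^sub>v N"
    using Q(2,3) unfolding y_def by (auto simp: vec_eq_iff)
  have defect: "?r * y $ i - (A *\<^sub>v y) $ i = poly (V 0) ?r" if i: "i < N" for i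
  proof -
    have "?r * y $ i - (A *\<^sub>v y) $ i = ((?r \<cdot>\<^sub>m 1\<^sub>m N - A) *\<^sub>v y) $ i"
      using shift_mat_mult_vec[OF A(1) y(1)] A(1) y(1) i by simp
    also have "\<dots> = (\<Sum>j<N. (?r \<cdot>\<^sub>m 1\<^sub>m N - A) $$ (i,j) * y $ j)"
      by (rule mult_mat_vec_nth_sum) (use A(1) y(1) i in auto)
    also have "\<dots> = poly (V i) ?r"
      unfolding V_def poly_sum using A(1) i
      by (intro sum.cong) (auto simp: poly_char_poly_matrix y_def simp del: index_minus_mat)
    finally show ?thesis using V[OF i] by simp
  qed
  then have "poly (V 0) ?r = 0"
    using rho_defect_const_nonneg[OF A y] rho_defect_const_nonpos[OF A y] by (meson order.antisym)
  then have "A *\<^sub>v y = ?r \<cdot>\<^sub>v y"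
    using defect A(1) y(1) by (intro eq_vecI) auto
  then show ?thesis using that y by blast
qed

section \<open>Splittings and the iteration matrix\<close>

lemma splitting_component_nonneg:
  assumes split: "is_splitting n d BJ Bs" and BJ: "nonneg_mat BJ" and p: "p \<in> {1..d}"
  shows "nonneg_mat (Bs p)"
  unfolding nonneg_mat_def
proof (intro allI impI)
  fix i j assume "i < dim_row (Bs p)" "j < dim_col (Bs p)"
  then have ij: "i < n" "j < n" using split p by (auto simp: is_splitting_def)
  show "0 \<le> Bs p $$ (i,j)"
  proof (cases "Bs p $$ (i,j) = 0")
    case False
    have "Bs q $$ (i,j) = 0" if q: "q \<in> {1..d}" "q \<noteq> p" for q
    proof -
      have "hadamard_mat (Bs q) (Bs p) $$ (i,j) = 0"
        using split p q ij unfolding is_splitting_def by auto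
      moreover have "Bs q \<in> carrier_mat n n" using split q by (simp add: is_splitting_def)
      ultimately show ?thesis using ij False by (simp add: hadamard_mat_def)
    qed
    then have "BJ $$ (i,j) = Bs p $$ (i,j)"
      using split p ij by (auto simp: is_splitting_def intro: sum.remove[THEN trans] sum.neutral)
    moreover have "BJ \<in> carrier_mat n n" using split unfolding is_splitting_def by blast
    then have "0 \<le> BJ $$ (i,j)" using BJ ij unfolding nonneg_mat_def by auto
    ultimately show ?thesis by simp
  qed simp
qed

lemma irreducible_mat_closed_subset:
  assumes "irreducible_mat n A" "S \<subseteq> {..<n}" "\<forall>i\<in>S. \<forall>j\<in>{..<n} - S. A $$ (i,j) = 0"
  shows "S = {} \<or> S = {..<n}"
proof (cases "n \<ge> 2")
  case True
  then show ?thesis using assms unfolding irreducible_mat_def reducible_mat_def by blast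
next
  case False
  then have "n \<le> 1" by simp
  then show ?thesis using assms(2) by (cases n) (auto simp: lessThan_Suc subset_singleton_iff)
qed

lemma unit_lower_triangular_inverse:
  fixes L :: "real mat"
  assumes L: "L \<in> carrier_mat N N" and lower: "\<And>i j. i \<le> j \<Longrightarrow> j < N \<Longrightarrow> L $$ (i,j) = 0"
  obtains X where "mat_inverse (1\<^sub>m N - L) = Some X" "X \<in> carrier_mat N N" "(1\<^sub>m N - L) * X = 1\<^sub>m N"
proof -
  have IL: "1\<^sub>m N - L \<in> carrier_mat N N" using L by (simp add: minus_carrier_mat)
  have "det (1\<^sub>m N - L) = prod_list (diag_mat (1\<^sub>m N - L))"
    by (rule det_lower_triangular[OF _ IL]) (use L lower in auto)
  also have "diag_mat (1\<^sub>m N - L) = replicate N 1"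
    using L lower by (intro nth_equalityI) (auto simp: diag_mat_def)
  finally have "det (1\<^sub>m N - L) = 1" by simp
  then have "det (1\<^sub>m N - L) \<noteq> 0" by simp
  then obtain X where "mat_inverse (1\<^sub>m N - L) = Some X"
  proof (cases "mat_inverse (1\<^sub>m N - L)")
    case None
    then show ?thesis
      using mat_inverse(1)[OF IL None, of "()"] det_non_zero_imp_unit[OF IL, of "()"] \<open>det _ \<noteq> 0\<close>
      by simp
  qed
  then show ?thesis using that mat_inverse(2)[OF IL] by blast
qed

text \<open>Forward substitution \<open>X = I + L X\<close> computes \<open>X\<close> row by row, from nonnegative data only.\<close>
lemma unit_lower_triangular_inverse_nonneg:
  fixes L X :: "real mat"
  assumes L: "L \<in> carrier_mat N N" "nonneg_mat L" and lower: "\<And>i j. i \<le> j \<Longrightarrow> j < N \<Longrightarrow> L $$ (i,j) = 0"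
    and X: "X \<in> carrier_mat N N" "(1\<^sub>m N - L) * X = 1\<^sub>m N"
  shows "nonneg_mat X"
proof -
  have rec: "X $$ (i,j) = (if i = j then 1 else 0) + (\<Sum>k<N. L $$ (i,k) * X $$ (k,j))"
    if ij: "i < N" "j < N" for i j
  proof -
    have "1\<^sub>m N $$ (i,j) = ((1\<^sub>m N - L) * X) $$ (i,j)" using X(2) by simp
    also have "\<dots> = X $$ (i,j) - (\<Sum>k<N. L $$ (i,k) * X $$ (k,j))"
      using L(1) X(1) ij by (simp add: scalar_prod_def atLeast0LessThan sum_subtractf left_diff_distrib
          if_distrib[of "\<lambda>a. a * _"] cong: if_cong)
    finally show ?thesis using ij by simp
  qed
  have "\<forall>j<N. 0 \<le> X $$ (i,j)" if "i < N" for i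
    using that
  proof (induction i rule: less_induct)
    case (less i)
    show ?case
    proof (intro allI impI)
      fix j assume j: "j < N"
      have "0 \<le> L $$ (i,k) * X $$ (k,j)" if k: "k < N" for k
      proof (cases "k < i")
        case True
        then have "0 \<le> X $$ (k,j)" using less.IH k j by blast
        moreover have "0 \<le> L $$ (i,k)" using L less.prems k unfolding nonneg_mat_def by auto
        ultimately show ?thesis by simp
      next
        case False
        then show ?thesis using lower[of i k] k by simp
      qed
      then have "0 \<le> (\<Sum>k<N. L $$ (i,k) * X $$ (k,j))" by (intro sum_nonneg) simp
      then show "0 \<le> X $$ (i,j)" using rec[OF less.prems j] by simp
    qed
  qed
  then show ?thesis using X(1) by (auto simp: nonneg_mat_def)
qed

text \<open>Block indices run from \<open>1\<close> to \<open>d\<close>, as for \<open>block_vec\<close>.\<close>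
definition block_mat :: "nat \<Rightarrow> nat \<Rightarrow> (nat \<Rightarrow> nat \<Rightarrow> real mat) \<Rightarrow> real mat" where
  "block_mat n d F = mat (d*n) (d*n) (\<lambda>(i,j). F (i div n + 1) (j div n + 1) $$ (i mod n, j mod n))"

lemma mod_less_of_less_mult: "i < d * n \<Longrightarrow> i mod n < (n :: nat)"
  by (cases "n = 0") auto

lemma block_L_eq_block_mat: "block_L n d Bs = block_mat n d (\<lambda>p q. if q < p then Bs q else 0\<^sub>m n n)"
  unfolding block_L_def block_mat_def by (rule eq_matI) (auto simp: mod_less_of_less_mult)

lemma block_U_eq_block_mat: "block_U n d Bs = block_mat n d (\<lambda>p q. if p \<le> q then Bs q else 0\<^sub>m n n)"
  unfolding block_U_def block_mat_def by (rule eq_matI) (auto simp: mod_less_of_less_mult)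

lemma block_index:
  fixes p d k n :: nat
  assumes "p \<in> {1..d}" "k < n"
  shows "(p - 1) * n + k < d * n" "((p - 1) * n + k) div n = p - 1" "((p - 1) * n + k) mod n = k"
proof -
  have "(p - 1) * n + k < (p - 1) * n + n" using assms(2) by linarith
  also have "\<dots> = p * n" using assms by (cases p) auto
  also have "\<dots> \<le> d * n" using assms by simp
  finally show "(p - 1) * n + k < d * n" .
qed (use assms in auto)

lemma sum_blocks:
  fixes f :: "nat \<Rightarrow> 'a :: comm_monoid_add"
  shows "(\<Sum>h<d*n. f h) = (\<Sum>q=1..d. \<Sum>l<n. f ((q - 1) * n + l))"
proof -
  have "(\<Sum>h<d*n. f h) = (\<Sum>c<d. \<Sum>l<n. f (c * n + l))"
  proof (induction d)
    case (Suc d)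
    have "{..<Suc d * n} = {..<d * n} \<union> {d * n..<d * n + n}" by auto
    moreover have "(\<Sum>h\<in>{d * n..<d * n + n}. f h) = (\<Sum>l<n. f (d * n + l))"
      by (rule sum.reindex_bij_witness[of _ "\<lambda>h. d * n + h" "\<lambda>h. h - d * n"]) auto
    ultimately show ?case using Suc by (simp add: sum.union_disjoint ivl_disj_int)
  qed simp
  also have "\<dots> = (\<Sum>q=1..d. \<Sum>l<n. f ((q - 1) * n + l))"
    by (rule sum.reindex_bij_witness[of _ "\<lambda>q. q - 1" "\<lambda>c. c + 1"]) auto
  finally show ?thesis .
qed

lemma block_vec_carrier [simp]: "block_vec n y p \<in> carrier_vec n"
  by (simp add: block_vec_def)

lemma dim_block_vec [simp]: "dim_vec (block_vec n y p) = n"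
  by (simp add: block_vec_def)

lemma block_mat_mult_vec:
  assumes F: "\<And>p q. p \<in> {1..d} \<Longrightarrow> q \<in> {1..d} \<Longrightarrow> F p q \<in> carrier_mat n n"
    and y: "y \<in> carrier_vec (d*n)" and p: "p \<in> {1..d}" and k: "k < n"
  shows "(block_mat n d F *\<^sub>v y) $ ((p - 1) * n + k) = (\<Sum>q=1..d. (F p q *\<^sub>v block_vec n y q) $ k)"
proof -
  have "(block_mat n d F *\<^sub>v y) $ ((p - 1) * n + k)
      = (\<Sum>h<d*n. block_mat n d F $$ ((p - 1) * n + k, h) * y $ h)"
    by (rule mult_mat_vec_nth_sum) (use y block_index[OF p k] in \<open>auto simp: block_mat_def\<close>)
  also have "\<dots> = (\<Sum>q=1..d. \<Sum>l<n.
      block_mat n d F $$ ((p - 1) * n + k, (q - 1) * n + l) * y $ ((q - 1) * n + l))"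
    by (rule sum_blocks)
  also have "\<dots> = (\<Sum>q=1..d. (F p q *\<^sub>v block_vec n y q) $ k)"
  proof (rule sum.cong[OF refl])
    fix q assume q: "q \<in> {1..d}"
    have "(F p q *\<^sub>v block_vec n y q) $ k = (\<Sum>l<n. F p q $$ (k,l) * block_vec n y q $ l)"
      by (rule mult_mat_vec_nth_sum) (use F[OF p q] k in auto)
    also have "\<dots> = (\<Sum>l<n.
        block_mat n d F $$ ((p - 1) * n + k, (q - 1) * n + l) * y $ ((q - 1) * n + l))"
      using block_index[OF p k] block_index[OF q] p q
      by (intro sum.cong) (auto simp: block_mat_def block_vec_def)
    finally show "(\<Sum>l<n.
        block_mat n d F $$ ((p - 1) * n + k, (q - 1) * n + l) * y $ ((q - 1) * n + l))
        = (F p q *\<^sub>v block_vec n y q) $ k" by simp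
  qed
  finally show ?thesis .
qed

lemma block_L_carrier [simp]: "block_L n d Bs \<in> carrier_mat (d*n) (d*n)"
  by (simp add: block_L_def)

lemma block_U_carrier [simp]: "block_U n d Bs \<in> carrier_mat (d*n) (d*n)"
  by (simp add: block_U_def)

lemma block_L_strictly_lower: "i \<le> j \<Longrightarrow> j < d*n \<Longrightarrow> block_L n d Bs $$ (i,j) = 0"
  using div_le_mono[of i j n] by (simp add: block_L_def)

lemma iter_mat_factor:
  obtains X where "X \<in> carrier_mat (d*n) (d*n)" "(1\<^sub>m (d*n) - block_L n d Bs) * X = 1\<^sub>m (d*n)"
    "iter_mat n d Bs = X * block_U n d Bs"
proof -
  obtain X where "mat_inverse (1\<^sub>m (d*n) - block_L n d Bs) = Some X" "X \<in> carrier_mat (d*n) (d*n)"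
    "(1\<^sub>m (d*n) - block_L n d Bs) * X = 1\<^sub>m (d*n)"
    using unit_lower_triangular_inverse[OF block_L_carrier block_L_strictly_lower] by blast
  then show ?thesis using that by (simp add: iter_mat_def)
qed

lemma iter_mat_carrier: "iter_mat n d Bs \<in> carrier_mat (d*n) (d*n)"
proof -
  obtain X where "X \<in> carrier_mat (d*n) (d*n)" "iter_mat n d Bs = X * block_U n d Bs"
    using iter_mat_factor by metis
  then show ?thesis by simp
qed

lemma iter_mat_nonneg:
  assumes split: "is_splitting n d BJ Bs" and BJ: "nonneg_mat BJ"
  shows "nonneg_mat (iter_mat n d Bs)"
proof -
  have Bs: "0 \<le> Bs (j div n + 1) $$ (i mod n, j mod n)" if "i < d*n" "j < d*n" for i j
  proof -
    have "j div n + 1 \<in> {1..d}" using less_mult_imp_div_less[OF that(2)] by simp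
    then show ?thesis
      using splitting_component_nonneg[OF split BJ] split that mod_less_of_less_mult
      unfolding nonneg_mat_def is_splitting_def by fastforce
  qed
  have L: "nonneg_mat (block_L n d Bs)" and U: "nonneg_mat (block_U n d Bs)"
    using Bs by (auto simp: nonneg_mat_def block_L_def block_U_def)
  obtain X where X: "X \<in> carrier_mat (d*n) (d*n)" "(1\<^sub>m (d*n) - block_L n d Bs) * X = 1\<^sub>m (d*n)"
    "iter_mat n d Bs = X * block_U n d Bs"
    using iter_mat_factor by metis
  then have "nonneg_mat X"
    using unit_lower_triangular_inverse_nonneg[OF block_L_carrier L block_L_strictly_lower] by blast
  then show ?thesis using X U nonneg_mat_mult[OF X(1) block_U_carrier] by simp
qed

lemma iter_mat_eigenvector_blocks:
  assumes Bs: "\<And>q. q \<in> {1..d} \<Longrightarrow> Bs q \<in> carrier_mat n n"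
    and y: "y \<in> carrier_vec (d*n)" "iter_mat n d Bs *\<^sub>v y = r \<cdot>\<^sub>v y"
    and p: "p \<in> {1..d}" and k: "k < n"
  shows "r * block_vec n y p $ k = (\<Sum>q=1..d. (if p \<le> q then 1 else r) * (Bs q *\<^sub>v block_vec n y q) $ k)"
proof -
  let ?L = "block_L n d Bs" and ?U = "block_U n d Bs" and ?v = "\<lambda>q. (Bs q *\<^sub>v block_vec n y q) $ k"
  let ?g = "(p - 1) * n + k"
  obtain X where X: "X \<in> carrier_mat (d*n) (d*n)" "(1\<^sub>m (d*n) - ?L) * X = 1\<^sub>m (d*n)"
    "iter_mat n d Bs = X * ?U"
    using iter_mat_factor by metis
  have L: "?L \<in> carrier_mat (d*n) (d*n)" and U: "?U \<in> carrier_mat (d*n) (d*n)" by simp_all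
  have IL: "1\<^sub>m (d*n) - ?L \<in> carrier_mat (d*n) (d*n)" using L by (simp add: minus_carrier_mat)
  have "(1\<^sub>m (d*n) - ?L) * iter_mat n d Bs = ?U"
    using X U IL
    by (simp add: assoc_mult_mat[symmetric, of _ "d*n" "d*n" _ "d*n" _ "d*n"] left_mult_one_mat[OF U])
  then have "?U *\<^sub>v y = (1\<^sub>m (d*n) - ?L) *\<^sub>v (iter_mat n d Bs *\<^sub>v y)"
    using assoc_mult_mat_vec[OF IL iter_mat_carrier[of n d Bs] y(1)] by simp
  also have "\<dots> = r \<cdot>\<^sub>v (y - ?L *\<^sub>v y)"
    unfolding y(2) mult_mat_vec[OF IL y(1)] minus_mult_distrib_mat_vec[OF one_carrier_mat L y(1)]
    using y(1) by simp
  finally have "?U *\<^sub>v y = r \<cdot>\<^sub>v (y - ?L *\<^sub>v y)" .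
  then have "(?U *\<^sub>v y) $ ?g = r * (y $ ?g - (?L *\<^sub>v y) $ ?g)"
    using block_index(1)[OF p k] y carrier_matD[OF L] by simp
  moreover have "(?U *\<^sub>v y) $ ?g = (\<Sum>q=1..d. if p \<le> q then ?v q else 0)"
    unfolding block_U_eq_block_mat using Bs p k y
    by (subst block_mat_mult_vec) (auto intro!: sum.cong)
  moreover have "(?L *\<^sub>v y) $ ?g = (\<Sum>q=1..d. if q < p then ?v q else 0)"
    unfolding block_L_eq_block_mat using Bs p k y
    by (subst block_mat_mult_vec) (auto intro!: sum.cong)
  moreover have "y $ ?g = block_vec n y p $ k" using k by (simp add: block_vec_def)
  moreover have "(\<Sum>q=1..d. (if p \<le> q then 1 else r) * ?v q)
      = (\<Sum>q=1..d. (if p \<le> q then ?v q else 0) + r * (if q < p then ?v q else 0))"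
    by (rule sum.cong) auto
  then have "(\<Sum>q=1..d. (if p \<le> q then 1 else r) * ?v q)
      = (\<Sum>q=1..d. if p \<le> q then ?v q else 0) + r * (\<Sum>q=1..d. if q < p then ?v q else 0)"
    by (simp add: sum.distrib sum_distrib_left)
  ultimately show ?thesis by (simp add: algebra_simps)
qed

text \<open>The block form of \<open>T(\<B>) x = r x\<close> for the blocks \<open>x\<^sub>p\<close> and \<open>v\<^sub>q = B\<^sub>q x\<^sub>q\<close>, one coordinate at a time.\<close>
lemma block_recurrence_monotone:
  fixes r :: real and x v :: "nat \<Rightarrow> real"
  assumes d: "1 \<le> d" and r: "0 < r" and v: "\<And>q. q \<in> {1..d} \<Longrightarrow> 0 \<le> v q"
    and E: "\<And>p. p \<in> {1..d} \<Longrightarrow> r * x p = (\<Sum>q=1..d. (if p \<le> q then 1 else r) * v q)"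
  shows "r \<le> 1 \<Longrightarrow> (\<forall>p\<in>{1..<d}. x (p + 1) \<le> x p) \<and> r * x 1 \<le> x d"
    and "1 \<le> r \<Longrightarrow> (\<forall>p\<in>{1..<d}. x p \<le> x (p + 1)) \<and> x d \<le> r * x 1"
proof -
  have step: "r * (x (p + 1) - x p) = (r - 1) * v p" if p: "p \<in> {1..<d}" for p
  proof -
    have "r * (x (p + 1) - x p)
        = (\<Sum>q=1..d. (if p + 1 \<le> q then 1 else r) * v q - (if p \<le> q then 1 else r) * v q)"
      using E[of p] E[of "p + 1"] p by (simp add: right_diff_distrib sum_subtractf)
    also have "\<dots> = (\<Sum>q=1..d. if q = p then (r - 1) * v q else 0)"
      by (rule sum.cong) (auto simp: algebra_simps)
    also have "\<dots> = (r - 1) * v p" using p by simp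
    finally show ?thesis .
  qed
  have "(\<Sum>q=1..d. (if d \<le> q then 1 else r) * v q)
      = (\<Sum>q=1..d. r * v q + (if q = d then (1 - r) * v q else 0))"
    by (rule sum.cong) (auto simp: algebra_simps)
  then have "r * x d = (\<Sum>q=1..d. r * v q + (if q = d then (1 - r) * v q else 0))"
    using E[of d] d by simp
  also have "\<dots> = r * (r * x 1) + (1 - r) * v d"
    using E[of 1] d by (simp add: sum.distrib sum_distrib_left)
  finally have wrap: "r * x d = r * (r * x 1) + (1 - r) * v d" .
  show "r \<le> 1 \<Longrightarrow> (\<forall>p\<in>{1..<d}. x (p + 1) \<le> x p) \<and> r * x 1 \<le> x d"
  proof
    assume "r \<le> 1"
    then have "r * (x (p + 1) - x p) \<le> 0" if "p \<in> {1..<d}" for p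
      using step[OF that] v[of p] that by (simp add: mult_nonpos_nonneg)
    then show "\<forall>p\<in>{1..<d}. x (p + 1) \<le> x p" using r by (simp add: mult_le_0_iff)
    have "r * (r * x 1) \<le> r * x d" using wrap v[of d] d \<open>r \<le> 1\<close> by simp
    then show "r * x 1 \<le> x d" using r by simp
  qed
  show "1 \<le> r \<Longrightarrow> (\<forall>p\<in>{1..<d}. x p \<le> x (p + 1)) \<and> x d \<le> r * x 1"
  proof
    assume "1 \<le> r"
    then have "0 \<le> r * (x (p + 1) - x p)" if "p \<in> {1..<d}" for p
      using step[OF that] v[of p] that by simp
    then show "\<forall>p\<in>{1..<d}. x p \<le> x (p + 1)" using r by (simp add: zero_le_mult_iff)
    have "r * x d \<le> r * (r * x 1)" using wrap v[of d] d \<open>1 \<le> r\<close> by (simp add: mult_nonpos_nonneg)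
    then show "x d \<le> r * x 1" using r by simp
  qed
qed

lemma block_recurrence_zero:
  fixes r :: real and x v :: "nat \<Rightarrow> real"
  assumes r: "0 < r" and v: "\<And>q. q \<in> {1..d} \<Longrightarrow> 0 \<le> v q"
    and E: "\<And>p. p \<in> {1..d} \<Longrightarrow> r * x p = (\<Sum>q=1..d. (if p \<le> q then 1 else r) * v q)"
    and p: "p \<in> {1..d}" "x p = 0" and q: "q \<in> {1..d}"
  shows "v q = 0" "x q = 0"
proof -
  have "\<forall>q\<in>{1..d}. (if p \<le> q then 1 else r) * v q = 0"
    using E[OF p(1)] p(2) v r by (subst sum_nonneg_eq_0_iff[symmetric]) auto
  then have v0: "\<forall>q\<in>{1..d}. v q = 0" using r by (auto split: if_splits)
  then show "v q = 0" using q by simp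
  show "x q = 0" using E[OF q] v0 r by simp
qed

lemma vec_index_block:
  assumes "g < d * n"
  shows "y $ g = block_vec n y (g div n + 1) $ (g mod n)"
  using assms mod_less_of_less_mult[OF assms] by (simp add: block_vec_def)

lemma block_vec_nonneg:
  assumes "\<forall>i<d*n. 0 \<le> y $ i" "p \<in> {1..d}"
  shows "\<forall>k<n. 0 \<le> block_vec n y p $ k"
  using assms block_index(1)[OF assms(2)] by (simp add: block_vec_def)

lemma splitting_dim_pos:
  assumes "is_splitting n d BJ Bs"
  shows "0 < n" "1 \<le> d"
proof -
  show "1 \<le> d" using assms by (simp add: is_splitting_def)
  then have "Bs 1 \<in> carrier_mat n n" "Bs 1 \<noteq> 0\<^sub>m n n" using assms by (auto simp: is_splitting_def)
  then show "0 < n" by (cases n) (auto intro!: eq_matI)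
qed

lemma splitting_eigenvector_recurrence:
  assumes split: "is_splitting n d BJ Bs" and BJ: "nonneg_mat BJ"
    and y: "y \<in> carrier_vec (d*n)" "\<forall>i<d*n. 0 \<le> y $ i" "iter_mat n d Bs *\<^sub>v y = r \<cdot>\<^sub>v y"
  shows "\<And>q k. q \<in> {1..d} \<Longrightarrow> k < n \<Longrightarrow> 0 \<le> (Bs q *\<^sub>v block_vec n y q) $ k"
    and "\<And>p k. p \<in> {1..d} \<Longrightarrow> k < n \<Longrightarrow>
      r * block_vec n y p $ k = (\<Sum>q=1..d. (if p \<le> q then 1 else r) * (Bs q *\<^sub>v block_vec n y q) $ k)"
proof -
  have Bs: "\<And>q. q \<in> {1..d} \<Longrightarrow> Bs q \<in> carrier_mat n n" using split by (auto simp: is_splitting_def)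
  show "0 \<le> (Bs q *\<^sub>v block_vec n y q) $ k" if "q \<in> {1..d}" "k < n" for q k
    using nonneg_mat_mult_vec_nonneg[OF Bs[OF that(1)] splitting_component_nonneg[OF split BJ that(1)]]
      block_vec_nonneg[OF y(2) that(1)] that(2) by simp
  show "r * block_vec n y p $ k
      = (\<Sum>q=1..d. (if p \<le> q then 1 else r) * (Bs q *\<^sub>v block_vec n y q) $ k)"
    if "p \<in> {1..d}" "k < n" for p k
    using iter_mat_eigenvector_blocks[OF Bs y(1,3) that] .
qed

lemma splitting_eigenvector_zero_coordinate:
  assumes split: "is_splitting n d BJ Bs" and BJ: "nonneg_mat BJ"
    and y: "y \<in> carrier_vec (d*n)" "\<forall>i<d*n. 0 \<le> y $ i" "iter_mat n d Bs *\<^sub>v y = r \<cdot>\<^sub>v y"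
    and r: "0 < r" and k: "k < n" and p: "p \<in> {1..d}" "block_vec n y p $ k = 0" and q: "q \<in> {1..d}"
  shows "(Bs q *\<^sub>v block_vec n y q) $ k = 0" "block_vec n y q $ k = 0"
  using block_recurrence_zero[where x = "\<lambda>p. block_vec n y p $ k"
      and v = "\<lambda>q. (Bs q *\<^sub>v block_vec n y q) $ k", OF r
      splitting_eigenvector_recurrence(1)[OF split BJ y _ k]
      splitting_eigenvector_recurrence(2)[OF split BJ y _ k] p q] by auto

lemma splitting_eigenvector_pos:
  assumes irr: "irreducible_mat n BJ" and BJ: "nonneg_mat BJ" and split: "is_splitting n d BJ Bs"
    and y: "y \<in> carrier_vec (d*n)" "y \<noteq> 0\<^sub>v (d*n)" "\<forall>i<d*n. 0 \<le> y $ i"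
      "iter_mat n d Bs *\<^sub>v y = r \<cdot>\<^sub>v y"
    and r: "0 < r"
  shows "\<forall>i<d*n. 0 < y $ i"
proof -
  define x where "x p = block_vec n y p" for p
  note zero = splitting_eigenvector_zero_coordinate[OF split BJ y(1,3,4) r, folded x_def]
  have Bs: "\<And>q. q \<in> {1..d} \<Longrightarrow> Bs q \<in> carrier_mat n n"
    and BJ_sum: "\<And>k l. k < n \<Longrightarrow> l < n \<Longrightarrow> BJ $$ (k,l) = (\<Sum>q=1..d. Bs q $$ (k,l))"
    using split by (auto simp: is_splitting_def)
  define S where "S = {k. k < n \<and> x 1 $ k = 0}"
  have "\<forall>k\<in>S. \<forall>l\<in>{..<n} - S. BJ $$ (k,l) = 0"
  proof (intro ballI)
    fix k l assume k: "k \<in> S" and l: "l \<in> {..<n} - S"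
    have "Bs q $$ (k,l) = 0" if q: "q \<in> {1..d}" for q
    proof -
      have "(\<Sum>l'<n. Bs q $$ (k,l') * x q $ l') = (Bs q *\<^sub>v x q) $ k"
        using mult_mat_vec_nth_sum[OF Bs[OF q] _ , of "x q" k] k unfolding x_def S_def by simp
      also have "\<dots> = 0" using zero(1)[of k 1 q] k q unfolding S_def by auto
      finally have "Bs q $$ (k,l) * x q $ l = 0"
        using l q block_vec_nonneg[OF y(3) q] splitting_component_nonneg[OF split BJ q] Bs[OF q] k
        by (subst (asm) sum_nonneg_eq_0_iff) (auto simp: nonneg_mat_def S_def x_def)
      moreover have "x q $ l \<noteq> 0" using zero(2)[of l q 1] l q unfolding S_def by auto
      ultimately show ?thesis by simp
    qed
    then show "BJ $$ (k,l) = 0" using BJ_sum k l unfolding S_def by simp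
  qed
  moreover have "S \<subseteq> {..<n}" unfolding S_def by auto
  ultimately have "S = {} \<or> S = {..<n}" using irreducible_mat_closed_subset[OF irr] by blast
  have block: "g mod n < n" "g div n + 1 \<in> {1..d}" "y $ g = x (g div n + 1) $ (g mod n)"
    if g: "g < d*n" for g
    using mod_less_of_less_mult[OF g] less_mult_imp_div_less[OF g] vec_index_block[OF g]
    unfolding x_def by auto
  have "S \<noteq> {..<n}"
  proof
    assume "S = {..<n}"
    then have "y $ g = 0" if "g < d*n" for g
      using zero(2)[of "g mod n" 1 "g div n + 1"] block[OF that] unfolding S_def by auto
    then show False using y(1,2) by (auto intro!: eq_vecI)
  qed
  then have "x 1 $ k \<noteq> 0" if "k < n" for k
    using \<open>S = {} \<or> S = {..<n}\<close> that unfolding S_def by blast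
  then have "y $ g \<noteq> 0" if "g < d*n" for g
    using zero(2)[of "g mod n" "g div n + 1" 1] block[OF that] by auto
  then show ?thesis using y(3) by (simp add: order_less_le)
qed

lemma splitting_eigenvector_blocks_monotone:
  assumes split: "is_splitting n d BJ Bs" and BJ: "nonneg_mat BJ"
    and y: "y \<in> carrier_vec (d*n)" "\<forall>i<d*n. 0 \<le> y $ i" "iter_mat n d Bs *\<^sub>v y = r \<cdot>\<^sub>v y"
    and r: "0 < r"
  shows "r \<le> 1 \<Longrightarrow> (\<forall>p\<in>{1..<d}. vle n (block_vec n y (p + 1)) (block_vec n y p))
           \<and> vle n (r \<cdot>\<^sub>v block_vec n y 1) (block_vec n y d)"
    and "1 \<le> r \<Longrightarrow> (\<forall>p\<in>{1..<d}. vle n (block_vec n y p) (block_vec n y (p + 1)))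
           \<and> vle n (block_vec n y d) (r \<cdot>\<^sub>v block_vec n y 1)"
proof -
  define x where "x p = block_vec n y p" for p
  note hyps = splitting_eigenvector_recurrence[OF split BJ y, folded x_def]
  have rec: "(r \<le> 1 \<longrightarrow> (\<forall>p\<in>{1..<d}. x (p + 1) $ k \<le> x p $ k) \<and> r * x 1 $ k \<le> x d $ k)
      \<and> (1 \<le> r \<longrightarrow> (\<forall>p\<in>{1..<d}. x p $ k \<le> x (p + 1) $ k) \<and> x d $ k \<le> r * x 1 $ k)"
    if k: "k < n" for k
    using block_recurrence_monotone[where x = "\<lambda>p. x p $ k" and v = "\<lambda>q. (Bs q *\<^sub>v x q) $ k",
      OF splitting_dim_pos(2)[OF split] r hyps(1)[OF _ k] hyps(2)[OF _ k]] by blast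
  show "r \<le> 1 \<Longrightarrow> (\<forall>p\<in>{1..<d}. vle n (block_vec n y (p + 1)) (block_vec n y p))
           \<and> vle n (r \<cdot>\<^sub>v block_vec n y 1) (block_vec n y d)"
    using rec by (auto simp: vle_def x_def)
  show "1 \<le> r \<Longrightarrow> (\<forall>p\<in>{1..<d}. vle n (block_vec n y p) (block_vec n y (p + 1)))
           \<and> vle n (block_vec n y d) (r \<cdot>\<^sub>v block_vec n y 1)"
    using rec by (auto simp: vle_def x_def)
qed

theorem proposition3p1:
  fixes n d :: nat and BJ :: "real mat" and Bs :: "nat \<Rightarrow> real mat"
  assumes "BJ \<in> carrier_mat n n"
    and "irreducible_mat n BJ"
    and "nonneg_mat BJ"
    and "is_splitting n d BJ Bs"
    and "rho (iter_mat n d Bs) > 0"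
  shows "\<exists>x. eigenvector (iter_mat n d Bs) x (rho (iter_mat n d Bs))
           \<and> (\<forall>i<d*n. x $ i > 0)
           \<and> (let lam = rho (iter_mat n d Bs); al = block_vec n x in
               (lam \<le> 1 \<longrightarrow>
                  (\<forall>i<n. 0 < lam * (al 1 $ i)) \<and> vle n (lam \<cdot>\<^sub>v al 1) (al d) \<and>
                  (\<forall>p\<in>{1..<d}. vle n (al (p+1)) (al p))) \<and>
               (lam \<ge> 1 \<longrightarrow>
                  (\<forall>i<n. 0 < al 1 $ i) \<and>
                  (\<forall>p\<in>{1..<d}. vle n (al p) (al (p+1))) \<and> vle n (al d) (lam \<cdot>\<^sub>v al 1)))"
proof -
  let ?T = "iter_mat n d Bs"
  let ?r = "rho ?T"
  have "0 < d * n" using splitting_dim_pos[OF assms(4)] by simp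
  then obtain y where y: "y \<in> carrier_vec (d*n)" "y \<noteq> 0\<^sub>v (d*n)" "\<forall>i<d*n. 0 \<le> y $ i"
    "?T *\<^sub>v y = ?r \<cdot>\<^sub>v y"
    using nonneg_eigenvector_rho[OF iter_mat_carrier iter_mat_nonneg[OF assms(4,3)]] by blast
  have pos: "\<forall>i<d*n. 0 < y $ i"
    using splitting_eigenvector_pos[OF assms(2,3,4) y assms(5)] .
  then have "0 < block_vec n y 1 $ i" if "i < n" for i
    using that block_index(1)[of 1 d i n] splitting_dim_pos[OF assms(4)] by (simp add: block_vec_def)
  moreover have "eigenvector ?T y ?r"
    using y iter_mat_carrier[of n d Bs] by (simp add: eigenvector_def)
  ultimately show ?thesis
    using pos assms(5) splitting_eigenvector_blocks_monotone[OF assms(4,3) y(1,3,4) assms(5)]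
    by (intro exI[of _ y]) (auto simp: Let_def)
qed

end
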